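(* For every constant $\alpha>1$, any stable approximation scheme (SAS) for the dynamic broadcast range-assignment problem in $\mathbb{R}^1$ with distance-power gradient $\alpha$ must have stability parameter $k(\varepsilon)=\Omega\big((1/\varepsilon)^{1/(\alpha-1)}\big)$.
   Context: Broadcast range-assignment problem: $P$ is a finite set of points in $\mathbb{R}^1$ containing a designated source $s$. A range assignment $\rho$ gives each $p\in P$ a range $\rho(p)\ge 0$; it induces the directed communication graph on $P$ with an edge $(p,q)$ iff $|pq|\le\rho(p)$. The assignment is feasible if this graph contains an arborescence rooted at $s$ spanning $P$. Its cost is $\sum_{p\in P}\rho(p)^\alpha$, $\alpha>1$; $\mathrm{OPT}(P)$ is the minimum cost of a feasible assignment. In the dynamic version, points other than $s$ are inserted into and deleted from $P$. An update algorithm, given the current assignment and the update, outputs a feasible assignment for the updated set. The range of a point not in the current set is $0$. An update algorithm is $k$-stable if each insertion or deletion modifies at most $k$ ranges. A stable approximation scheme (SAS) is an update algorithm that, for any given fixed $\varepsilon>0$, is $k(\varepsilon)$-stable and after every update has cost at most $(1+\varepsilon)\mathrm{OPT}(P)$, where $k(\varepsilon)$ depends only on $\varepsilon$ and not on $|P|$. *)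

theory Defs
  imports Complex_Main "HOL-Library.Landau_Symbols"
begin

definition comm_edge :: "real set \<Rightarrow> (real \<Rightarrow> real) \<Rightarrow> real \<Rightarrow> real \<Rightarrow> bool" where
  "comm_edge P \<rho> p q \<longleftrightarrow> p \<in> P \<and> q \<in> P \<and> \<bar>p - q\<bar> \<le> \<rho> p"

definition has_arborescence :: "real \<Rightarrow> real set \<Rightarrow> (real \<Rightarrow> real) \<Rightarrow> bool" where
  "has_arborescence s P \<rho> \<longleftrightarrow>
     (\<exists>par :: real \<Rightarrow> real.
        (\<forall>q \<in> P - {s}. par q \<in> P \<and> comm_edge P \<rho> (par q) q) \<and>
        (\<forall>q \<in> P. \<exists>n. (par ^^ n) q = s))"

definition range_assignment :: "real set \<Rightarrow> (real \<Rightarrow> real) \<Rightarrow> bool" where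
  "range_assignment P \<rho> \<longleftrightarrow> (\<forall>p. \<rho> p \<ge> 0) \<and> (\<forall>p. p \<notin> P \<longrightarrow> \<rho> p = 0)"

definition feasible :: "real \<Rightarrow> real set \<Rightarrow> (real \<Rightarrow> real) \<Rightarrow> bool" where
  "feasible s P \<rho> \<longleftrightarrow> range_assignment P \<rho> \<and> has_arborescence s P \<rho>"

definition cost :: "real \<Rightarrow> real set \<Rightarrow> (real \<Rightarrow> real) \<Rightarrow> real" where
  "cost \<alpha> P \<rho> = (\<Sum>p\<in>P. \<rho> p powr \<alpha>)"

definition OPT :: "real \<Rightarrow> real \<Rightarrow> real set \<Rightarrow> real" where
  "OPT \<alpha> s P = Inf {cost \<alpha> P \<rho> | \<rho>. feasible s P \<rho>}"

datatype upd = Ins real | Del real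

definition valid_upd :: "real \<Rightarrow> real set \<Rightarrow> upd \<Rightarrow> bool" where
  "valid_upd s P u = (case u of Ins x \<Rightarrow> x \<noteq> s \<and> x \<notin> P | Del x \<Rightarrow> x \<noteq> s \<and> x \<in> P)"

fun apply_upd :: "upd \<Rightarrow> real set \<Rightarrow> real set" where
  "apply_upd (Ins x) P = insert x P"
| "apply_upd (Del x) P = P - {x}"

text \<open>An update algorithm maps (current point set, current assignment, update)
  to the new assignment. States reachable from the initial state P = {s}, rho = 0
  by sequences of valid updates.\<close>
inductive_set reachable ::
  "(real set \<Rightarrow> (real \<Rightarrow> real) \<Rightarrow> upd \<Rightarrow> (real \<Rightarrow> real)) \<Rightarrow> real \<Rightarrow> (real set \<times> (real \<Rightarrow> real)) set"
  for alg s where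
  init: "({s}, (\<lambda>_. 0)) \<in> reachable alg s"
| step: "(P, \<rho>) \<in> reachable alg s \<Longrightarrow> valid_upd s P u \<Longrightarrow>
         (apply_upd u P, alg P \<rho> u) \<in> reachable alg s"

definition modified :: "(real \<Rightarrow> real) \<Rightarrow> (real \<Rightarrow> real) \<Rightarrow> real set" where
  "modified \<rho> \<rho>' = {p. \<rho> p \<noteq> \<rho>' p}"

text \<open>alg eps is the update algorithm used for accuracy parameter eps;
  it is k(eps)-stable and (1+eps)-approximate after every update.\<close>
definition SAS :: "real \<Rightarrow> real \<Rightarrow>
    (real \<Rightarrow> real set \<Rightarrow> (real \<Rightarrow> real) \<Rightarrow> upd \<Rightarrow> (real \<Rightarrow> real)) \<Rightarrow> (real \<Rightarrow> nat) \<Rightarrow> bool" where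
  "SAS \<alpha> s alg k \<longleftrightarrow>
     (\<forall>\<epsilon>>0. \<forall>P \<rho> u. (P, \<rho>) \<in> reachable (alg \<epsilon>) s \<longrightarrow> valid_upd s P u \<longrightarrow>
        (let P' = apply_upd u P; \<rho>' = alg \<epsilon> P \<rho> u in
           feasible s P' \<rho>' \<and>
           finite (modified \<rho> \<rho>') \<and> card (modified \<rho> \<rho>') \<le> k \<epsilon> \<and>
           cost \<alpha> P' \<rho>' \<le> (1 + \<epsilon>) * OPT \<alpha> s P'))"

end

theory Submission
  imports Defs "HOL-Real_Asymp.Real_Asymp"
begin

(* Insert the points s + 1, ..., s + d one by one. The chain with all ranges 1 costs d, so the
   scheme's assignment costs at most (1 + eps) d. The path from s + d back to s in its arborescence
   consists of relays of range at least 1 whose ranges add up to at least d; since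
   x^alpha >= 2^(alpha-1) x - 2 (2^(alpha-1) - 1) for x >= 1, there are roughly d/4 such relays
   when eps is small. Now insert s - d. A single range d at s serves everything, so the new cost is
   at most (1 + eps) d^alpha, and the parent of s - d alone already costs d^alpha. Every relay that
   kept its range contributes at least 1 to the remaining budget eps d^alpha, so all but
   eps d^alpha + 1 of the relays were modified. For d of order eps^(-1/(alpha-1)) this budget is
   at most d/8, which leaves Omega(d) modified ranges. *)

lemma cost_nonneg: "0 \<le> cost \<alpha> P \<rho>"
  unfolding cost_def by (simp add: sum_nonneg)

lemma OPT_le_cost:
  assumes "feasible s P \<rho>"
  shows "OPT \<alpha> s P \<le> cost \<alpha> P \<rho>"
  unfolding OPT_def
proof (rule cInf_lower)
  show "cost \<alpha> P \<rho> \<in> {cost \<alpha> P \<rho> |\<rho>. feasible s P \<rho>}"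
    using assms by blast
  show "bdd_below {cost \<alpha> P \<rho> |\<rho>. feasible s P \<rho>}"
    by (rule bdd_belowI[of _ 0]) (auto simp: cost_nonneg)
qed

lemma OPT_nonneg:
  assumes "feasible s P \<rho>"
  shows "0 \<le> OPT \<alpha> s P"
  unfolding OPT_def using assms by (intro cInf_greatest) (auto simp: cost_nonneg)

lemma OPT_le_radius_powr:
  assumes "finite P" "s \<in> P" "0 \<le> r" "\<And>q. q \<in> P \<Longrightarrow> \<bar>q - s\<bar> \<le> r"
  shows "OPT \<alpha> s P \<le> r powr \<alpha>"
proof -
  define \<rho> where "\<rho> p = (if p = s then r else 0)" for p
  have "feasible s P \<rho>"
    unfolding feasible_def range_assignment_def has_arborescence_def comm_edge_def
    using assms by (intro conjI exI[of _ "\<lambda>_. s"]) (auto simp: \<rho>_def abs_minus_commute intro: exI[of _ 1])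
  moreover have "cost \<alpha> P \<rho> = r powr \<alpha>"
  proof -
    have "cost \<alpha> P \<rho> = (\<Sum>p\<in>P. if p = s then r powr \<alpha> else 0)"
      unfolding cost_def \<rho>_def by (rule sum.cong) auto
    also have "\<dots> = r powr \<alpha>"
      using assms(1,2) by simp
    finally show ?thesis .
  qed
  ultimately show ?thesis
    using OPT_le_cost by metis
qed

lemma SAS_update:
  assumes "SAS \<alpha> s alg k" "0 < \<epsilon>" "(P, \<rho>) \<in> reachable (alg \<epsilon>) s" "valid_upd s P u"
  shows "feasible s (apply_upd u P) (alg \<epsilon> P \<rho> u)"
    and "finite (modified \<rho> (alg \<epsilon> P \<rho> u))"
    and "card (modified \<rho> (alg \<epsilon> P \<rho> u)) \<le> k \<epsilon>"
    and "cost \<alpha> (apply_upd u P) (alg \<epsilon> P \<rho> u) \<le> (1 + \<epsilon>) * OPT \<alpha> s (apply_upd u P)"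
  using assms unfolding SAS_def Let_def by blast+

lemma SAS_reachable_approx:
  assumes "SAS \<alpha> s alg k" "0 < \<epsilon>" "(P, \<rho>) \<in> reachable (alg \<epsilon>) s"
  shows "feasible s P \<rho> \<and> cost \<alpha> P \<rho> \<le> (1 + \<epsilon>) * OPT \<alpha> s P"
  using assms(3)
proof cases
  case init
  have "feasible s {s} (\<lambda>_. 0)"
    unfolding feasible_def range_assignment_def has_arborescence_def
    by (auto intro!: exI[of _ 0])
  moreover have "cost \<alpha> {s} (\<lambda>_. 0) = 0"
    by (simp add: cost_def)
  ultimately show ?thesis
    using init OPT_nonneg[of s "{s}" "\<lambda>_. 0" \<alpha>] \<open>0 < \<epsilon>\<close> by simp
next
  case (step P\<^sub>0 \<rho>\<^sub>0 u)
  then show ?thesis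
    using SAS_update[OF assms(1,2)] by blast
qed

section \<open>The unit grid\<close>

definition grid :: "real \<Rightarrow> nat \<Rightarrow> real set" where
  "grid s d = (\<lambda>i. s + real i) ` {..d}"

lemma finite_grid [simp]: "finite (grid s d)"
  by (simp add: grid_def)

lemma grid_Suc: "grid s (Suc d) = insert (s + real (Suc d)) (grid s d)"
  by (simp add: grid_def atMost_Suc)

lemma grid_separated: "x \<in> grid s d \<Longrightarrow> y \<in> grid s d \<Longrightarrow> x \<noteq> y \<Longrightarrow> 1 \<le> \<bar>x - y\<bar>"
  unfolding grid_def by (auto simp: abs_if)

lemma reachable_grid: "\<exists>\<rho>. (grid s d, \<rho>) \<in> reachable A s"
proof (induction d)
  case 0
  then show ?case
    using reachable.init by (auto simp: grid_def)
next
  case (Suc d)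
  then obtain \<rho> where "(grid s d, \<rho>) \<in> reachable A s" by blast
  moreover have "valid_upd s (grid s d) (Ins (s + real (Suc d)))"
    by (auto simp: valid_upd_def grid_def)
  ultimately show ?case
    using reachable.step by (fastforce simp: grid_Suc)
qed

definition grid_chain :: "real \<Rightarrow> nat \<Rightarrow> real \<Rightarrow> real" where
  "grid_chain s d p = (if p \<in> grid s d \<and> p \<noteq> s + real d then 1 else 0)"

lemma grid_chain_at: "i \<le> d \<Longrightarrow> grid_chain s d (s + real i) = (if i < d then 1 else 0)"
  by (auto simp: grid_chain_def grid_def)

lemma feasible_grid_chain: "feasible s (grid s d) (grid_chain s d)"
proof -
  have parent: "q - 1 \<in> grid s d \<and> comm_edge (grid s d) (grid_chain s d) (q - 1) q"
    if q: "q \<in> grid s d - {s}" for q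
  proof -
    obtain i where i: "i \<le> d" "0 < i" "q = s + real i"
      using q by (auto simp: grid_def)
    then have pred: "q - 1 = s + real (i - 1)"
      by (simp add: of_nat_diff)
    have "q - 1 \<in> grid s d"
      unfolding pred grid_def using i by (intro rev_image_eqI[of "i - 1"]) auto
    moreover have "grid_chain s d (q - 1) = 1"
      unfolding pred using i grid_chain_at[of "i - 1" d s] by simp
    ultimately show ?thesis
      using q by (simp add: comm_edge_def)
  qed
  have iterate: "((\<lambda>q. q - 1) ^^ n) q = q - real n" for n q
    by (induction n) auto
  have reach: "\<forall>q\<in>grid s d. \<exists>n. ((\<lambda>q. q - 1) ^^ n) q = s"
    unfolding grid_def iterate by auto
  have "range_assignment (grid s d) (grid_chain s d)"
    by (simp add: range_assignment_def grid_chain_def)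
  then show ?thesis
    unfolding feasible_def has_arborescence_def using parent reach
    by (intro conjI exI[of _ "\<lambda>q. q - 1"]) blast+
qed

lemma cost_grid_chain: "cost \<alpha> (grid s d) (grid_chain s d) = real d"
proof -
  have "cost \<alpha> (grid s d) (grid_chain s d) = (\<Sum>i\<le>d. grid_chain s d (s + real i) powr \<alpha>)"
    unfolding cost_def grid_def by (subst sum.reindex) (auto simp: inj_on_def)
  also have "\<dots> = (\<Sum>i\<le>d. if i < d then 1 else 0)"
    by (rule sum.cong) (auto simp: grid_chain_at)
  also have "\<dots> = real d"
    using Int_absorb1[of "{..<d}" "{..d}"] by (simp add: sum.If_cases subset_eq flip: lessThan_def)
  finally show ?thesis .
qed

lemma OPT_grid_le: "OPT \<alpha> s (grid s d) \<le> real d"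
  using OPT_le_cost[OF feasible_grid_chain] by (simp add: cost_grid_chain)

section \<open>Paths in an arborescence\<close>

lemma inj_on_funpow_upto_first_hit:
  fixes f :: "'a \<Rightarrow> 'a"
  assumes "(f ^^ n) x = y" "\<forall>m<n. (f ^^ m) x \<noteq> y"
  shows "inj_on (\<lambda>m. (f ^^ m) x) {..n}"
proof (rule linorder_inj_onI')
  fix i j assume "i \<in> {..n}" "j \<in> {..n}" "i < j"
  show "(f ^^ i) x \<noteq> (f ^^ j) x"
  proof
    assume eq: "(f ^^ i) x = (f ^^ j) x"
    have "(f ^^ (n - j + i)) x = (f ^^ (n - j)) ((f ^^ i) x)"
      by (simp add: funpow_add)
    also have "\<dots> = (f ^^ (n - j)) ((f ^^ j) x)"
      using eq by simp
    also have "\<dots> = y"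
      using assms(1) \<open>j \<in> {..n}\<close> by (metis atMost_iff funpow_add o_apply le_add_diff_inverse2)
    finally show False
      using assms(2) \<open>i < j\<close> \<open>j \<in> {..n}\<close> by auto
  qed
qed

lemma arborescence_path_ranges:
  assumes "has_arborescence s P \<rho>" "q \<in> P"
    and sep: "\<And>x y. x \<in> P \<Longrightarrow> y \<in> P \<Longrightarrow> x \<noteq> y \<Longrightarrow> \<delta> \<le> \<bar>x - y\<bar>"
  obtains S where "S \<subseteq> P" "finite S" "\<And>p. p \<in> S \<Longrightarrow> \<delta> \<le> \<rho> p" "\<bar>q - s\<bar> \<le> sum \<rho> S"
proof -
  obtain par where par: "\<forall>q\<in>P - {s}. par q \<in> P \<and> comm_edge P \<rho> (par q) q"
    and reach: "\<forall>q\<in>P. \<exists>n. (par ^^ n) q = s"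
    using assms(1) unfolding has_arborescence_def by blast
  \<comment> \<open>Stopping at the first visit of \<open>s\<close> makes the path simple, so no range is counted twice.\<close>
  obtain n where hit: "(par ^^ n) q = s" and first: "\<forall>m<n. (par ^^ m) q \<noteq> s"
    using reach \<open>q \<in> P\<close> exists_least_iff[of "\<lambda>n. (par ^^ n) q = s"] by blast
  define x where "x m = (par ^^ m) q" for m
  have inj: "inj_on x {..n}"
    unfolding x_def using inj_on_funpow_upto_first_hit[OF hit first] .
  have edge: "x (Suc m) \<in> P \<and> \<bar>x (Suc m) - x m\<bar> \<le> \<rho> (x (Suc m))" if "m < n" "x m \<in> P" for m
    using par that first by (auto simp: x_def comm_edge_def abs_minus_commute)
  have mem: "m \<le> n \<Longrightarrow> x m \<in> P" for m
  proof (induction m)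
    case 0
    then show ?case
      by (simp add: x_def \<open>q \<in> P\<close>)
  next
    case (Suc m)
    then show ?case
      using edge[of m] by simp
  qed
  show ?thesis
  proof (rule that[of "(\<lambda>m. x (Suc m)) ` {..<n}"])
    show "(\<lambda>m. x (Suc m)) ` {..<n} \<subseteq> P"
      using mem by auto
    show "\<delta> \<le> \<rho> p" if p: "p \<in> (\<lambda>m. x (Suc m)) ` {..<n}" for p
    proof -
      obtain m where "m < n" "p = x (Suc m)"
        using p by blast
      moreover have "x (Suc m) \<noteq> x m"
        using inj \<open>m < n\<close> by (auto dest: inj_onD)
      ultimately show ?thesis
        using sep edge mem by (smt (verit) less_imp_le_nat)
    qed
    have inj_shift: "inj_on (\<lambda>m. x (Suc m)) {..<n}"
      using inj by (intro inj_onI) (auto dest: inj_onD)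
    have "\<bar>q - s\<bar> = \<bar>\<Sum>m<n. x (Suc m) - x m\<bar>"
      unfolding sum_lessThan_telescope by (simp add: x_def hit abs_minus_commute)
    also have "\<dots> \<le> (\<Sum>m<n. \<bar>x (Suc m) - x m\<bar>)"
      by (rule sum_abs)
    also have "\<dots> \<le> (\<Sum>m<n. \<rho> (x (Suc m)))"
      using edge mem by (intro sum_mono) auto
    also have "\<dots> = sum \<rho> ((\<lambda>m. x (Suc m)) ` {..<n})"
      using inj_shift by (simp add: sum.reindex)
    finally show "\<bar>q - s\<bar> \<le> sum \<rho> ((\<lambda>m. x (Suc m)) ` {..<n})" .
  qed simp
qed

lemma arborescence_parent:
  assumes "has_arborescence s P \<rho>" "q \<in> P" "q \<noteq> s"
  obtains b where "b \<in> P" "b \<noteq> q" "\<bar>b - q\<bar> \<le> \<rho> b"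
proof -
  obtain par where par: "\<forall>q\<in>P - {s}. par q \<in> P \<and> comm_edge P \<rho> (par q) q"
    and reach: "\<forall>q\<in>P. \<exists>n. (par ^^ n) q = s"
    using assms(1) unfolding has_arborescence_def by blast
  have "par q \<noteq> q"
  proof
    assume "par q = q"
    then have "(par ^^ n) q = q" for n
      by (induction n) auto
    then show False
      using reach assms(2,3) by metis
  qed
  then show ?thesis
    using that par assms(2,3) by (auto simp: comm_edge_def)
qed

lemma affine_le_powr:
  fixes x \<alpha> :: real
  assumes "1 \<le> \<alpha>" "1 \<le> x"
  shows "2 powr (\<alpha> - 1) * x - 2 * (2 powr (\<alpha> - 1) - 1) \<le> x powr \<alpha>"
proof (cases "x \<le> 2")
  case True
  have "0 \<le> (2 powr (\<alpha> - 1) - 1) * (2 - x)"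
    using assms True by (intro mult_nonneg_nonneg) (auto intro: ge_one_powr_ge_zero)
  then have "2 powr (\<alpha> - 1) * x - 2 * (2 powr (\<alpha> - 1) - 1) \<le> x"
    by (simp add: algebra_simps)
  also have "x = x powr 1"
    using assms by simp
  also have "\<dots> \<le> x powr \<alpha>"
    using assms by (intro powr_mono) auto
  finally show ?thesis .
next
  case False
  have "2 powr (\<alpha> - 1) * x \<le> x powr (\<alpha> - 1) * x"
    using assms False by (intro mult_right_mono powr_mono2) auto
  also have "\<dots> = x powr \<alpha>"
    using assms by (simp add: powr_mult_base mult.commute)
  finally show ?thesis
    using assms by (smt (verit) ge_one_powr_ge_zero)
qed

lemma cost_ge_path_ranges:
  assumes "1 \<le> \<alpha>" "finite P" "has_arborescence s P \<rho>" "q \<in> P"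
    and sep: "\<And>x y. x \<in> P \<Longrightarrow> y \<in> P \<Longrightarrow> x \<noteq> y \<Longrightarrow> 1 \<le> \<bar>x - y\<bar>"
  obtains S where "S \<subseteq> P" "\<And>p. p \<in> S \<Longrightarrow> 1 \<le> \<rho> p"
    "2 powr (\<alpha> - 1) * \<bar>q - s\<bar> - 2 * (2 powr (\<alpha> - 1) - 1) * card S \<le> cost \<alpha> P \<rho>"
proof -
  obtain S where S: "S \<subseteq> P" "finite S" "\<And>p. p \<in> S \<Longrightarrow> 1 \<le> \<rho> p" "\<bar>q - s\<bar> \<le> sum \<rho> S"
    using arborescence_path_ranges[OF assms(3,4) sep] by blast
  define \<gamma> where "\<gamma> = 2 powr (\<alpha> - 1)"
  have "\<gamma> * \<bar>q - s\<bar> - 2 * (\<gamma> - 1) * card S \<le> \<gamma> * sum \<rho> S - 2 * (\<gamma> - 1) * card S"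
    using S(4) by (simp add: \<gamma>_def)
  also have "\<dots> = (\<Sum>p\<in>S. \<gamma> * \<rho> p - 2 * (\<gamma> - 1))"
    by (simp add: sum_subtractf sum_distrib_left)
  also have "\<dots> \<le> (\<Sum>p\<in>S. \<rho> p powr \<alpha>)"
    using S(3) affine_le_powr[OF assms(1)] by (intro sum_mono) (simp add: \<gamma>_def)
  also have "\<dots> \<le> cost \<alpha> P \<rho>"
    unfolding cost_def using S(1) assms(2) by (intro sum_mono2) auto
  finally show ?thesis
    using that S(1,3) unfolding \<gamma>_def by blast
qed

lemma card_le_modified_plus_cost:
  assumes "0 \<le> \<alpha>" "finite P" "S \<subseteq> P" "b \<in> P" "finite (modified \<rho> \<rho>')"
    and ranges: "\<And>p. p \<in> S \<Longrightarrow> 1 \<le> \<rho> p"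
  shows "card S \<le> card (modified \<rho> \<rho>') + 1 + (cost \<alpha> P \<rho>' - \<rho>' b powr \<alpha>)"
proof -
  define T where "T = S - modified \<rho> \<rho>' - {b}"
  have finT: "finite T" and "b \<notin> T"
    using assms(2,3) finite_subset by (auto simp: T_def)
  have "card S \<le> card (T \<union> insert b (modified \<rho> \<rho>'))"
    using finT assms(5) by (intro card_mono) (auto simp: T_def)
  also have "\<dots> \<le> card T + card (insert b (modified \<rho> \<rho>'))"
    by (rule card_Un_le)
  also have "\<dots> \<le> card T + card (modified \<rho> \<rho>') + 1"
    using assms(5) by (simp add: card_insert_if)
  finally have "card S \<le> card T + card (modified \<rho> \<rho>') + 1" .
  moreover have "\<rho>' b powr \<alpha> + card T \<le> cost \<alpha> P \<rho>'"
  proof -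
    have "card T = (\<Sum>p\<in>T. 1::real)"
      by simp
    also have "\<dots> \<le> (\<Sum>p\<in>T. \<rho>' p powr \<alpha>)"
      using ranges assms(1) by (intro sum_mono ge_one_powr_ge_zero) (force simp: T_def modified_def)+
    finally have "\<rho>' b powr \<alpha> + card T \<le> (\<Sum>p\<in>insert b T. \<rho>' p powr \<alpha>)"
      using finT \<open>b \<notin> T\<close> by simp
    also have "\<dots> \<le> cost \<alpha> P \<rho>'"
      unfolding cost_def using assms(2,3,4) by (intro sum_mono2) (auto simp: T_def)
    finally show ?thesis .
  qed
  ultimately show ?thesis
    by linarith
qed

lemma SAS_stability_ge:
  assumes "1 < \<alpha>" "SAS \<alpha> s alg k" "0 < \<epsilon>" "1 \<le> d"
  defines "\<beta> \<equiv> 2 powr (\<alpha> - 1) - 1"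
  shows "(\<beta> - \<epsilon>) * real d \<le> 2 * \<beta> * (real (k \<epsilon>) + 1 + \<epsilon> * real d powr \<alpha>)"
proof -
  obtain \<rho> where reach: "(grid s d, \<rho>) \<in> reachable (alg \<epsilon>) s"
    using reachable_grid by blast
  have feas: "feasible s (grid s d) \<rho>" and "cost \<alpha> (grid s d) \<rho> \<le> (1 + \<epsilon>) * OPT \<alpha> s (grid s d)"
    using SAS_reachable_approx[OF assms(2,3) reach] by auto
  then have cost: "cost \<alpha> (grid s d) \<rho> \<le> (1 + \<epsilon>) * real d"
    using OPT_grid_le \<open>0 < \<epsilon>\<close> by (smt (verit) mult_left_mono)
  have "s + real d \<in> grid s d"
    by (auto simp: grid_def)
  then obtain S where S: "S \<subseteq> grid s d" "\<And>p. p \<in> S \<Longrightarrow> 1 \<le> \<rho> p"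
    and "(\<beta> + 1) * real d - 2 * \<beta> * card S \<le> cost \<alpha> (grid s d) \<rho>"
    using cost_ge_path_ranges[of \<alpha> "grid s d" s \<rho> "s + real d"] feas assms(1) grid_separated
    by (force simp: feasible_def \<beta>_def)
  with cost have relays: "(\<beta> - \<epsilon>) * real d \<le> 2 * \<beta> * card S"
    by (simp add: algebra_simps)
  define P' where "P' = insert (s - real d) (grid s d)"
  define \<rho>' where "\<rho>' = alg \<epsilon> (grid s d) \<rho> (Ins (s - real d))"
  have valid: "valid_upd s (grid s d) (Ins (s - real d))"
    using assms(4) by (auto simp: valid_upd_def grid_def)
  note update = SAS_update[OF assms(2,3) reach valid, folded \<rho>'_def, simplified, folded P'_def]
  have feas': "feasible s P' \<rho>'" and stable: "finite (modified \<rho> \<rho>')" "card (modified \<rho> \<rho>') \<le> k \<epsilon>"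
    and "cost \<alpha> P' \<rho>' \<le> (1 + \<epsilon>) * OPT \<alpha> s P'"
    using update by auto
  moreover have "OPT \<alpha> s P' \<le> real d powr \<alpha>"
    by (rule OPT_le_radius_powr) (auto simp: P'_def grid_def)
  ultimately have cost': "cost \<alpha> P' \<rho>' \<le> (1 + \<epsilon>) * real d powr \<alpha>"
    using \<open>0 < \<epsilon>\<close> by (smt (verit) mult_left_mono)
  obtain b where "b \<in> P'" "b \<noteq> s - real d" and edge: "\<bar>b - (s - real d)\<bar> \<le> \<rho>' b"
    using arborescence_parent[of s P' \<rho>' "s - real d"] feas' assms(4)
    by (auto simp: feasible_def P'_def)
  then have "b \<in> grid s d" "s \<le> b"
    by (auto simp: P'_def grid_def)
  with edge have "real d powr \<alpha> \<le> \<rho>' b powr \<alpha>"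
    using assms(1) by (intro powr_mono2) auto
  moreover have "card S \<le> card (modified \<rho> \<rho>') + 1 + (cost \<alpha> P' \<rho>' - \<rho>' b powr \<alpha>)"
    by (rule card_le_modified_plus_cost) (use assms(1) S \<open>b \<in> P'\<close> stable(1) in \<open>auto simp: P'_def\<close>)
  ultimately have "card S \<le> real (k \<epsilon>) + 1 + \<epsilon> * real d powr \<alpha>"
    using stable(2) cost' by (simp add: algebra_simps)
  moreover have "0 < \<beta>"
    using assms(1) by (simp add: \<beta>_def)
  ultimately have "2 * \<beta> * card S \<le> 2 * \<beta> * (real (k \<epsilon>) + 1 + \<epsilon> * real d powr \<alpha>)"
    by (intro mult_left_mono) auto
  with relays show ?thesis
    by linarith
qed

lemma SAS_stability_ge_root:
  assumes "1 < \<alpha>" "SAS \<alpha> s alg k" "0 < \<epsilon>" "\<epsilon> \<le> (2 powr (\<alpha> - 1) - 1) / 2"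
  defines "c \<equiv> 8 powr (- 1 / (\<alpha> - 1))" and "t \<equiv> (1 / \<epsilon>) powr (1 / (\<alpha> - 1))"
  assumes large: "20 \<le> c * t"
  shows "c / 16 * t \<le> real (k \<epsilon>)"
proof -
  define \<beta> where "\<beta> = 2 powr (\<alpha> - 1) - 1"
  have "0 < \<beta>"
    using assms(1) by (simp add: \<beta>_def)
  \<comment> \<open>\<open>c\<close> is chosen with \<open>c powr (\<alpha> - 1) = 1 / 8\<close>, so at \<open>d \<approx> c * t\<close> the budget \<open>\<epsilon> * d powr \<alpha>\<close> is at most \<open>d / 8\<close>.\<close>
  define d where "d = nat \<lfloor>c * t\<rfloor>"
  have d: "c * t - 1 \<le> real d" "real d \<le> c * t"
    using large by (auto simp: d_def)
  then have "1 \<le> d"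
    using large by (simp add: Suc_le_eq flip: of_nat_0_less_iff)
  have "(\<beta> - \<epsilon>) * real d \<le> 2 * \<beta> * (real (k \<epsilon>) + 1 + \<epsilon> * real d powr \<alpha>)"
    using SAS_stability_ge[OF assms(1-3) \<open>1 \<le> d\<close>] by (simp add: \<beta>_def)
  moreover have "\<beta> / 2 * real d \<le> (\<beta> - \<epsilon>) * real d"
    using assms(4) by (intro mult_right_mono) (auto simp: \<beta>_def)
  ultimately have "\<beta> * (real d / 4) \<le> \<beta> * (real (k \<epsilon>) + 1 + \<epsilon> * real d powr \<alpha>)"
    by simp
  then have main: "real d / 4 \<le> real (k \<epsilon>) + 1 + \<epsilon> * real d powr \<alpha>"
    using \<open>0 < \<beta>\<close> by simp
  have "c powr (\<alpha> - 1) = 8 powr (- 1 / (\<alpha> - 1) * (\<alpha> - 1))"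
    by (simp only: c_def powr_powr)
  then have "c powr (\<alpha> - 1) = 1 / 8"
    using assms(1) by (simp add: powr_minus_divide)
  moreover have "t powr (\<alpha> - 1) = 1 / \<epsilon>"
    using assms(1,3) by (simp add: t_def powr_powr)
  moreover have "0 < c" "0 < t"
    using assms(3) by (simp_all add: c_def t_def)
  then have "c powr \<alpha> = c * c powr (\<alpha> - 1)" "t powr \<alpha> = t * t powr (\<alpha> - 1)"
    by (simp_all add: powr_mult_base)
  with \<open>0 < c\<close> \<open>0 < t\<close> have "(c * t) powr \<alpha> = c * t * (c powr (\<alpha> - 1) * t powr (\<alpha> - 1))"
    by (simp add: powr_mult mult_ac)
  ultimately have "\<epsilon> * (c * t) powr \<alpha> = c * t / 8"
    using assms(3) by simp
  moreover have "\<epsilon> * real d powr \<alpha> \<le> \<epsilon> * (c * t) powr \<alpha>"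
    using d assms(1,3) by (intro mult_left_mono powr_mono2) auto
  ultimately show ?thesis
    using main d large by linarith
qed

theorem theorem4:
  fixes \<alpha> s :: real
    and alg :: "real \<Rightarrow> real set \<Rightarrow> (real \<Rightarrow> real) \<Rightarrow> upd \<Rightarrow> (real \<Rightarrow> real)"
    and k :: "real \<Rightarrow> nat"
  assumes "\<alpha> > 1"
    and "SAS \<alpha> s alg k"
  shows "(\<lambda>\<epsilon>. real (k \<epsilon>)) \<in> \<Omega>[at_right 0](\<lambda>\<epsilon>. (1 / \<epsilon>) powr (1 / (\<alpha> - 1)))"
proof (rule landau_omega.bigI)
  define c where "c = 8 powr (- 1 / (\<alpha> - 1))"
  show "0 < c / 16"
    by (simp add: c_def)
  have "filterlim (\<lambda>\<epsilon>. (1 / \<epsilon>) powr (1 / (\<alpha> - 1))) at_top (at_right 0)"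
    using assms(1) by real_asymp
  then have "\<forall>\<^sub>F \<epsilon> in at_right 0. 20 / c \<le> (1 / \<epsilon>) powr (1 / (\<alpha> - 1))"
    by (simp add: filterlim_at_top)
  moreover have "\<forall>\<^sub>F \<epsilon> in at_right 0. \<epsilon> < (2 powr (\<alpha> - 1) - 1) / 2"
    using assms(1) by (intro order_tendstoD(2)[OF tendsto_ident_at]) simp
  moreover note eventually_at_right_less
  ultimately show "\<forall>\<^sub>F \<epsilon> in at_right 0.
      c / 16 * norm ((1 / \<epsilon>) powr (1 / (\<alpha> - 1))) \<le> norm (real (k \<epsilon>))"
  proof eventually_elim
    case (elim \<epsilon>)
    then show ?case
      using SAS_stability_ge_root[OF assms] by (simp add: c_def field_simps)
  qed
qed

end
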